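(* Let $x_0<\dots<x_n$ and $\hat x_0<\dots<\hat x_n$ be real numbers with $\hat x_0=x_0$, $\hat x_n=x_n$, such that $\max_{k}\sum_{j\neq k}|r_{jk}(\mathbf{x},\hat{\mathbf{x}})|<0.01$ and $\max_k|\hat x_k-x_k|\le0.1\min_{j\neq k}|x_j-x_k|$. Let $f:[x_0,x_n]\to\mathbb{R}$ be Lipschitz with constant $L$, and $y_k=f(\hat x_k)$. Then for every $t\in[x_0,x_n]$, \[ |E(t;\mathbf{y},\mathbf{z})|\le L\,\rho(\hat{\mathbf{x}})\,\|\mathbf{z}\|_1+\Lambda(\hat{\mathbf{x}})\,\|\mathbf{z}\|_\infty\,\|f-P_{\mathbf{y}}\|_\infty . \]
   Context: $r_{jk}(\mathbf{x},\hat{\mathbf{x}}):=\frac{\hat x_k-\hat x_j}{x_k-x_j}-1$; $\lambda_k(\mathbf{x}):=1/\prod_{j\neq k}(x_k-x_j)$; $z_k=(\lambda_k(\mathbf{x})-\lambda_k(\hat{\mathbf{x}}))/\lambda_k(\hat{\mathbf{x}})$. $\ell_k$ is the $k$-th Lagrange polynomial for the nodes $\hat{\mathbf{x}}$; $\rho(\hat{\mathbf{x}}):=\max_{0\le k\le n}\max_{x_0\le t\le x_n}|\ell_k(t)(t-\hat x_k)|$; $\Lambda(\hat{\mathbf{x}}):=\max_{t\in[x_0,x_n]}\sum_k|\ell_k(t)|$. For $\mathbf{v}\in\mathbb{R}^{n+1}$, $P_{\mathbf{v}}$ is the polynomial of degree $\le n$ with $P_{\mathbf{v}}(\hat x_k)=v_k$;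 $E(t;\mathbf{y},\mathbf{z}):=P_{\mathbf{y}\mathbf{z}}(t)-P_{\mathbf{y}}(t)P_{\mathbf{z}}(t)$ with $(\mathbf{yz})_k=y_kz_k$. $\|\cdot\|_\infty$ for functions is the sup norm on $[x_0,x_n]$. *)

theory Defs
  imports "HOL-Analysis.Analysis"
begin

definition r_jk :: "(nat \<Rightarrow> real) \<Rightarrow> (nat \<Rightarrow> real) \<Rightarrow> nat \<Rightarrow> nat \<Rightarrow> real" where
  "r_jk x xh j k = (xh k - xh j) / (x k - x j) - 1"

definition lam :: "nat \<Rightarrow> (nat \<Rightarrow> real) \<Rightarrow> nat \<Rightarrow> real" where
  "lam n x k = 1 / (\<Prod>j\<in>{0..n}-{k}. (x k - x j))"

definition zvec :: "nat \<Rightarrow> (nat \<Rightarrow> real) \<Rightarrow> (nat \<Rightarrow> real) \<Rightarrow> nat \<Rightarrow> real" where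
  "zvec n x xh k = (lam n x k - lam n xh k) / lam n xh k"

definition lagr :: "nat \<Rightarrow> (nat \<Rightarrow> real) \<Rightarrow> nat \<Rightarrow> real \<Rightarrow> real" where
  "lagr n xh k t = (\<Prod>j\<in>{0..n}-{k}. (t - xh j) / (xh k - xh j))"

definition interp :: "nat \<Rightarrow> (nat \<Rightarrow> real) \<Rightarrow> (nat \<Rightarrow> real) \<Rightarrow> real \<Rightarrow> real" where
  "interp n xh v t = (\<Sum>k\<in>{0..n}. v k * lagr n xh k t)"

definition Eerr :: "nat \<Rightarrow> (nat \<Rightarrow> real) \<Rightarrow> (nat \<Rightarrow> real) \<Rightarrow> (nat \<Rightarrow> real) \<Rightarrow> real \<Rightarrow> real" where
  "Eerr n xh y z t = interp n xh (\<lambda>k. y k * z k) t - interp n xh y t * interp n xh z t"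

definition rho :: "nat \<Rightarrow> (nat \<Rightarrow> real) \<Rightarrow> real \<Rightarrow> real \<Rightarrow> real" where
  "rho n xh a b = (SUP p\<in>{0..n} \<times> {a..b}. \<bar>lagr n xh (fst p) (snd p) * (snd p - xh (fst p))\<bar>)"

definition lebesgue_const :: "nat \<Rightarrow> (nat \<Rightarrow> real) \<Rightarrow> real \<Rightarrow> real \<Rightarrow> real" where
  "lebesgue_const n xh a b = (SUP t\<in>{a..b}. (\<Sum>k\<in>{0..n}. \<bar>lagr n xh k t\<bar>))"

definition supnorm_on :: "real \<Rightarrow> real \<Rightarrow> (real \<Rightarrow> real) \<Rightarrow> real" where
  "supnorm_on a b g = (SUP t\<in>{a..b}. \<bar>g t\<bar>)"

end

theory Submission
  imports Defs
begin

text \<open>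
  Since \<open>P\<^sub>y\<^sub>z(t) - P\<^sub>y(t) P\<^sub>z(t) = \<Sum>\<^sub>k z\<^sub>k \<ell>\<^sub>k(t) (y\<^sub>k - P\<^sub>y(t))\<close>, splitting
  \<open>y\<^sub>k - P\<^sub>y(t) = (f(x\<^sub>k') - f(t)) + (f(t) - P\<^sub>y(t))\<close> and using the Lipschitz bound
  \<open>|f(x\<^sub>k') - f(t)| \<le> L |t - x\<^sub>k'|\<close> gives the two terms: the first is controlled by
  \<open>\<rho>\<close> and \<open>\<parallel>z\<parallel>\<^sub>1\<close>, the second by \<open>\<Lambda>\<close> and \<open>\<parallel>z\<parallel>\<^sub>\<infinity>\<close>. The estimate holds for an
  arbitrary weight vector \<open>z\<close>.
\<close>

lemma nodes_mono_le:
  fixes xh :: "nat \<Rightarrow> real"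
  assumes "\<forall>k<n. xh k < xh (Suc k)" "i \<le> j" "j \<le> n"
  shows "xh i \<le> xh j"
  using assms(2,3)
proof (induction j)
  case (Suc j)
  have "xh j < xh (Suc j)" using assms(1) Suc.prems(2) by simp
  then show ?case using Suc by (cases "i = Suc j") auto
qed simp

lemma continuous_on_lagr: "continuous_on S (lagr n xh k)"
  unfolding lagr_def divide_inverse by (intro continuous_intros)

lemma continuous_on_interp: "continuous_on S (interp n xh v)"
  unfolding interp_def using continuous_on_lagr by (intro continuous_intros) auto

lemma le_SUP_continuous_on_interval:
  fixes g :: "real \<Rightarrow> real"
  assumes "continuous_on {a..b} g" "t \<in> {a..b}"
  shows "g t \<le> (SUP s\<in>{a..b}. g s)"
  using assms
  by (intro cSUP_upper bounded_imp_bdd_above compact_imp_bounded compact_continuous_image) auto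

lemma abs_le_supnorm_on:
  assumes "continuous_on {a..b} g" "t \<in> {a..b}"
  shows "\<bar>g t\<bar> \<le> supnorm_on a b g"
  unfolding supnorm_on_def
  using assms by (intro le_SUP_continuous_on_interval continuous_intros)

lemma sum_abs_lagr_le_lebesgue_const:
  assumes "t \<in> {a..b}"
  shows "(\<Sum>k\<in>{0..n}. \<bar>lagr n xh k t\<bar>) \<le> lebesgue_const n xh a b"
  unfolding lebesgue_const_def
  using assms by (intro le_SUP_continuous_on_interval continuous_intros continuous_on_lagr)

lemma abs_lagr_mult_le_rho:
  assumes "k \<in> {0..n}" "t \<in> {a..b}"
  shows "\<bar>lagr n xh k t * (t - xh k)\<bar> \<le> rho n xh a b"
proof -
  let ?g = "\<lambda>p. \<bar>lagr n xh (fst p) (snd p) * (snd p - xh (fst p))\<bar>"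
  have "?g ` ({0..n} \<times> {a..b}) = (\<Union>j\<in>{0..n}. (\<lambda>s. ?g (j, s)) ` {a..b})"
    by force
  moreover have "bdd_above ((\<lambda>s. ?g (j, s)) ` {a..b})" for j
    by (intro bounded_imp_bdd_above compact_imp_bounded compact_continuous_image
        continuous_intros) (auto simp: continuous_on_lagr)
  ultimately have "bdd_above (?g ` ({0..n} \<times> {a..b}))"
    by (simp add: bdd_above_UN)
  with assms show ?thesis
    unfolding rho_def by (metis (no_types, lifting) cSUP_upper fst_conv mem_Sigma_iff snd_conv)
qed

lemma Eerr_eq_sum:
  "Eerr n xh y z t = (\<Sum>k\<in>{0..n}. z k * lagr n xh k t * (y k - interp n xh y t))"
  unfolding Eerr_def interp_def
  by (simp add: sum_distrib_left sum_distrib_right sum_subtractf algebra_simps)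

lemma abs_Eerr_lipschitz_le:
  fixes f :: "real \<Rightarrow> real" and z :: "nat \<Rightarrow> real"
  assumes nodes: "\<And>k. k \<in> {0..n} \<Longrightarrow> xh k \<in> {a..b}"
    and lip: "L-lipschitz_on {a..b} f"
    and t: "t \<in> {a..b}"
  shows "\<bar>Eerr n xh (\<lambda>k. f (xh k)) z t\<bar>
           \<le> L * rho n xh a b * (\<Sum>k\<in>{0..n}. \<bar>z k\<bar>)
             + lebesgue_const n xh a b * (MAX k\<in>{0..n}. \<bar>z k\<bar>)
               * supnorm_on a b (\<lambda>s. f s - interp n xh (\<lambda>k. f (xh k)) s)"
proof -
  define P where "P = interp n xh (\<lambda>k. f (xh k))"
  define l where "l = (\<lambda>k. lagr n xh k t)"
  define R where "R = rho n xh a b"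
  define M where "M = (MAX k\<in>{0..n}. \<bar>z k\<bar>)"
  define S where "S = supnorm_on a b (\<lambda>s. f s - P s)"
  have "0 \<le> L" using lip by (rule lipschitz_on_nonneg)
  have S: "\<bar>f t - P t\<bar> \<le> S"
    unfolding S_def P_def
    using t lipschitz_on_continuous_on[OF lip]
    by (intro abs_le_supnorm_on continuous_intros continuous_on_interp) auto
  have M: "\<bar>z k\<bar> \<le> M" if "k \<in> {0..n}" for k
    unfolding M_def using that by (intro Max_ge) auto
  then have "0 \<le> M" by force
  have term_le: "\<bar>z k * l k * (f (xh k) - P t)\<bar> \<le> \<bar>z k\<bar> * (L * R) + M * \<bar>l k\<bar> * S"
    if k: "k \<in> {0..n}" for k
  proof -
    have "\<bar>l k\<bar> * \<bar>f (xh k) - f t\<bar> \<le> \<bar>l k\<bar> * (L * \<bar>t - xh k\<bar>)"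
      using lipschitz_onD[OF lip, of "xh k" t] nodes[OF k] t
      by (intro mult_left_mono) (auto simp: dist_real_def abs_minus_commute)
    also have "\<dots> = L * \<bar>l k * (t - xh k)\<bar>" by (simp add: abs_mult)
    also have "\<dots> \<le> L * R"
      unfolding l_def R_def using \<open>0 \<le> L\<close> k t by (intro mult_left_mono abs_lagr_mult_le_rho)
    finally have lip_part: "\<bar>l k\<bar> * \<bar>f (xh k) - f t\<bar> \<le> L * R" .
    have "\<bar>z k * l k * (f (xh k) - P t)\<bar>
        \<le> \<bar>z k\<bar> * (\<bar>l k\<bar> * \<bar>f (xh k) - f t\<bar>) + \<bar>z k\<bar> * \<bar>l k\<bar> * \<bar>f t - P t\<bar>"
      unfolding abs_mult distrib_left[symmetric] mult.assoc
      by (intro mult_left_mono) (auto simp: abs_triangle_ineq[of "f (xh k) - f t" "f t - P t", simplified])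
    also have "\<dots> \<le> \<bar>z k\<bar> * (L * R) + M * \<bar>l k\<bar> * S"
    proof (rule add_mono)
      show "\<bar>z k\<bar> * (\<bar>l k\<bar> * \<bar>f (xh k) - f t\<bar>) \<le> \<bar>z k\<bar> * (L * R)"
        using lip_part by (rule mult_left_mono) simp
      show "\<bar>z k\<bar> * \<bar>l k\<bar> * \<bar>f t - P t\<bar> \<le> M * \<bar>l k\<bar> * S"
        using M[OF k] S \<open>0 \<le> M\<close> by (intro mult_mono) auto
    qed
    finally show ?thesis .
  qed
  have "\<bar>Eerr n xh (\<lambda>k. f (xh k)) z t\<bar> \<le> (\<Sum>k\<in>{0..n}. \<bar>z k * l k * (f (xh k) - P t)\<bar>)"
    unfolding Eerr_eq_sum P_def l_def by (rule sum_abs)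
  also have "\<dots> \<le> (\<Sum>k\<in>{0..n}. \<bar>z k\<bar> * (L * R) + M * \<bar>l k\<bar> * S)"
    by (intro sum_mono term_le)
  also have "\<dots> = L * R * (\<Sum>k\<in>{0..n}. \<bar>z k\<bar>) + (\<Sum>k\<in>{0..n}. \<bar>l k\<bar>) * M * S"
    by (simp add: sum.distrib sum_distrib_left sum_distrib_right algebra_simps)
  also have "\<dots> \<le> L * R * (\<Sum>k\<in>{0..n}. \<bar>z k\<bar>) + lebesgue_const n xh a b * M * S"
    unfolding l_def using S t \<open>0 \<le> M\<close>
    by (intro add_left_mono mult_right_mono sum_abs_lagr_le_lebesgue_const) auto
  finally show ?thesis
    by (simp add: P_def R_def M_def S_def)
qed

theorem lemma5:
  fixes n :: nat and x xh :: "nat \<Rightarrow> real" and f :: "real \<Rightarrow> real" and L :: real and t :: real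
  assumes x_incr: "\<forall>k<n. x k < x (Suc k)"
    and xh_incr: "\<forall>k<n. xh k < xh (Suc k)"
    and ends0: "xh 0 = x 0" and endsn: "xh n = x n"
    and rsmall: "\<forall>k\<in>{0..n}. (\<Sum>j\<in>{0..n}-{k}. \<bar>r_jk x xh j k\<bar>) < 0.01"
    and pert: "\<forall>k\<in>{0..n}. \<forall>j\<in>{0..n}. j \<noteq> k \<longrightarrow> \<bar>xh k - x k\<bar> \<le> 0.1 * \<bar>x j - x k\<bar>"
    and lip: "L-lipschitz_on {x 0..x n} f"
    and t: "t \<in> {x 0..x n}"
  shows "\<bar>Eerr n xh (\<lambda>k. f (xh k)) (zvec n x xh) t\<bar>
           \<le> L * rho n xh (x 0) (x n) * (\<Sum>k\<in>{0..n}. \<bar>zvec n x xh k\<bar>)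
             + lebesgue_const n xh (x 0) (x n) * (MAX k\<in>{0..n}. \<bar>zvec n x xh k\<bar>)
               * supnorm_on (x 0) (x n) (\<lambda>s. f s - interp n xh (\<lambda>k. f (xh k)) s)"
proof (rule abs_Eerr_lipschitz_le[OF _ lip t])
  fix k assume "k \<in> {0..n}"
  then show "xh k \<in> {x 0..x n}"
    using nodes_mono_le[OF xh_incr, of 0 k] nodes_mono_le[OF xh_incr, of k n] ends0 endsn
    by auto
qed

end
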